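(* For any quantum automaton $\mathcal{A}=(\mathcal{H},|s_0\rangle,\Sigma,\{U_\sigma\},F)$ and any $w\in\Sigma^\omega$, $f^{\mathrm{ND}}_{\mathcal{A}}(w)=f^{\mathrm{IR}}_{\mathcal{A}}(w)$.
   Context: A quantum automaton is a tuple $\mathcal{A}=(\mathcal{H},|s_0\rangle,\Sigma,\{U_\sigma:\sigma\in\Sigma\},F)$ where $\mathcal{H}$ is a finite-dimensional complex Hilbert space, $|s_0\rangle$ a unit vector, $\Sigma$ a finite alphabet, each $U_\sigma$ unitary, and $F$ a subspace with orthogonal projection $P_F$. For $w=\sigma_1\sigma_2\cdots\in\Sigma^\omega$ the non-disturbing run is $|s_n\rangle=U_{\sigma_n}\cdots U_{\sigma_1}|s_0\rangle$. Define $$f^{\mathrm{ND}}_{\mathcal{A}}(w)=\sup_{|\psi\rangle\in F,\||\psi\rangle\|=1}\sup_{\{n_i\}}\inf_{i\ge1}|\langle\psi|s_{n_i}\rangle|^2,\qquad f^{\mathrm{IR}}_{\mathcal{A}}(w)=\sup_{\{n_i\}}\inf_{i\ge1}\|P_F|s_{n_i}\rangle\|^2,$$ where $\{n_i\}$ ranges over strictly increasing sequences $0\le n_1<n_2<\cdots$ of natural numbers. *)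

theory Defs
  imports "HOL-Analysis.Analysis"
begin

text \<open>The finite-dimensional complex Hilbert space is modelled as complex^'n
  for a finite index type 'n, with the standard inner product (conjugate-linear in
  the first argument).\<close>

definition cinner :: "complex^'n \<Rightarrow> complex^'n \<Rightarrow> complex" where
  "cinner x y = (\<Sum>i\<in>UNIV. cnj (x$i) * y$i)"

definition adjoint_mat :: "complex^'n^'n \<Rightarrow> complex^'n^'n" where
  "adjoint_mat M = (\<chi> i j. cnj (M$j$i))"

definition unitary_mat :: "complex^'n^'n \<Rightarrow> bool" where
  "unitary_mat U \<longleftrightarrow> U ** adjoint_mat U = mat 1 \<and> adjoint_mat U ** U = mat 1"

definition csubspace :: "(complex^'n) set \<Rightarrow> bool" where
  "csubspace F \<longleftrightarrow> 0 \<in> F \<and> (\<forall>x\<in>F. \<forall>y\<in>F. x + y \<in> F) \<and> (\<forall>c. \<forall>x\<in>F. c *s x \<in> F)"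

definition proj :: "(complex^'n) set \<Rightarrow> complex^'n \<Rightarrow> complex^'n" where
  "proj F x = (THE p. p \<in> F \<and> (\<forall>y\<in>F. cinner y (x - p) = 0))"

primrec run :: "('s \<Rightarrow> complex^'n^'n) \<Rightarrow> complex^'n \<Rightarrow> (nat \<Rightarrow> 's) \<Rightarrow> nat \<Rightarrow> complex^'n" where
  "run U s0 w 0 = s0"
| "run U s0 w (Suc n) = U (w n) *v run U s0 w n"

text \<open>Values are taken in ennreal (complete lattice, Sup of the empty set is 0).
  Strictly increasing index sequences n_1 < n_2 < ... are strict_mono functions nat \<Rightarrow> nat.\<close>
definition f_ND :: "('s \<Rightarrow> complex^'n^'n) \<Rightarrow> complex^'n \<Rightarrow> (complex^'n) set \<Rightarrow> (nat \<Rightarrow> 's) \<Rightarrow> ennreal" where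
  "f_ND U s0 F w =
     (SUP \<psi>\<in>{\<psi>. \<psi> \<in> F \<and> norm \<psi> = 1}. SUP r\<in>{r::nat\<Rightarrow>nat. strict_mono r}.
        INF i. ennreal ((cmod (cinner \<psi> (run U s0 w (r i))))\<^sup>2))"

definition f_IR :: "('s \<Rightarrow> complex^'n^'n) \<Rightarrow> complex^'n \<Rightarrow> (complex^'n) set \<Rightarrow> (nat \<Rightarrow> 's) \<Rightarrow> ennreal" where
  "f_IR U s0 F w =
     (SUP r\<in>{r::nat\<Rightarrow>nat. strict_mono r}.
        INF i. ennreal ((norm (proj F (run U s0 w (r i))))\<^sup>2))"

end

theory Submission
  imports Defs
begin

(* Term by term, f_ND <= f_IR: for a unit vector psi in F, |<psi|s>| <= ||P_F s|| since s - P_F s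
   is orthogonal to F. Conversely, fix an index sequence. The run stays on the unit sphere, so a
   further subsequence converges to some l, and the infimum of ||P_F s||^2 along the index sequence
   is at most ||P_F l||^2. For psi = P_F l / ||P_F l|| the overlaps |<psi|s>|^2 along the
   subsequence tend to |<psi|l>|^2 = ||P_F l||^2, so its tails witness f_ND >= ||P_F l||^2. *)

lemma Re_cinner: "Re (cinner x y) = inner x y"
  unfolding cinner_def inner_vec_def inner_complex_def by (simp add: Re_sum)

lemma cinner_self: "cinner x x = complex_of_real ((norm x)\<^sup>2)"
proof -
  have "cinner x x = (\<Sum>i\<in>UNIV. complex_of_real ((cmod (x$i))\<^sup>2))"
    unfolding cinner_def by (intro sum.cong refl) (metis complex_norm_square mult.commute)
  also have "\<dots> = complex_of_real ((norm x)\<^sup>2)"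
    by (simp add: norm_vec_def L2_set_def sum_nonneg)
  finally show ?thesis .
qed

lemma cinner_add_right: "cinner x (y + z) = cinner x y + cinner x z"
  unfolding cinner_def by (simp add: algebra_simps sum.distrib)

lemma cinner_diff_right: "cinner x (y - z) = cinner x y - cinner x z"
  unfolding cinner_def by (simp add: algebra_simps sum_subtractf)

lemma cinner_smult_left: "cinner (c *s x) y = cnj c * cinner x y"
  unfolding cinner_def by (simp add: sum_distrib_left algebra_simps)

lemma tendsto_cinner_right: "X \<longlonglongrightarrow> l \<Longrightarrow> (\<lambda>k. cinner p (X k)) \<longlonglongrightarrow> cinner p l"
  unfolding cinner_def by (intro tendsto_intros tendsto_vec_nth)

lemma norm_vector_smult: "norm (c *s x) = cmod c * norm (x::complex^'n)"
  unfolding norm_vec_def by (simp add: L2_set_right_distrib norm_mult)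

lemma of_real_smult_eq_scaleR: "complex_of_real r *s x = r *\<^sub>R x"
  by (simp add: vec_eq_iff complex_eq_iff)

lemma cnj_sgn_mult_self: "cnj (sgn z) * z = complex_of_real (cmod z)"
proof -
  have "cnj (sgn z) * z = z * cnj z / complex_of_real (cmod z)"
    by (simp add: sgn_div_norm scaleR_conv_of_real divide_inverse)
  also have "\<dots> = complex_of_real ((cmod z)\<^sup>2 / cmod z)"
    by (simp only: complex_norm_square of_real_divide)
  also have "\<dots> = complex_of_real (cmod z)"
    by (simp add: power2_eq_square)
  finally show ?thesis .
qed

lemma cmod_cinner_le: "cmod (cinner x y) \<le> norm x * norm y"
proof (cases "cinner x y = 0")
  case False
  define a where "a = cinner x y"
  \<comment> \<open>Rotating x by the phase of a reduces to the real Cauchy-Schwarz inequality.\<close>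
  have "cinner (sgn a *s x) y = complex_of_real (cmod a)"
    by (simp add: a_def cinner_smult_left cnj_sgn_mult_self)
  then have "cmod a = inner (sgn a *s x) y"
    using Re_cinner[of "sgn a *s x" y] by simp
  also have "\<dots> \<le> norm (sgn a *s x) * norm y"
    by (rule norm_cauchy_schwarz)
  also have "norm (sgn a *s x) = norm x"
    using False by (simp add: a_def norm_vector_smult norm_sgn)
  finally show ?thesis unfolding a_def .
qed simp

lemma cinner_matrix_vector_mult_left: "cinner (A *v x) y = cinner x (adjoint_mat A *v y)"
proof -
  have "cinner (A *v x) y = (\<Sum>i\<in>UNIV. \<Sum>j\<in>UNIV. cnj (A$i$j) * cnj (x$j) * y$i)"
    unfolding cinner_def matrix_vector_mult_def by (simp add: sum_distrib_right)
  also have "\<dots> = (\<Sum>j\<in>UNIV. \<Sum>i\<in>UNIV. cnj (A$i$j) * cnj (x$j) * y$i)"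
    by (rule sum.swap)
  also have "\<dots> = cinner x (adjoint_mat A *v y)"
    unfolding cinner_def adjoint_mat_def matrix_vector_mult_def
    by (simp add: sum_distrib_left mult.commute mult.left_commute)
  finally show ?thesis .
qed

lemma norm_unitary_mult:
  assumes "unitary_mat A"
  shows "norm (A *v x) = norm x"
proof -
  have "cinner (A *v x) (A *v x) = cinner x x"
    using assms unfolding unitary_mat_def
    by (simp add: cinner_matrix_vector_mult_left matrix_vector_mul_assoc)
  then have "(norm (A *v x))\<^sup>2 = (norm x)\<^sup>2"
    unfolding cinner_self of_real_eq_iff .
  then show ?thesis by (simp add: power2_eq_iff_nonneg)
qed

lemma norm_run:
  assumes "\<And>\<sigma>. unitary_mat (U \<sigma>)"
  shows "norm (run U s0 w n) = norm s0"
  by (induction n) (simp_all add: norm_unitary_mult[OF assms])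

lemma csubspace_imp_subspace: "csubspace F \<Longrightarrow> subspace F"
  unfolding csubspace_def subspace_def by (metis of_real_smult_eq_scaleR)

lemma closest_point_in_csubspace:
  assumes "csubspace F"
  shows "closest_point F x \<in> F"
proof -
  have "subspace F"
    using assms by (rule csubspace_imp_subspace)
  then show ?thesis
    by (intro closest_point_in_set closed_subspace) (auto dest: subspace_0)
qed

lemma cinner_closest_point_orthogonal:
  assumes "csubspace F" "y \<in> F"
  shows "cinner y (x - closest_point F x) = 0"
proof -
  define p where "p = closest_point F x"
  have sub: "subspace F"
    using assms(1) by (rule csubspace_imp_subspace)
  have real_orth: "inner z (x - p) = 0" if "z \<in> F" for z
  proof -
    have "p + z \<in> F" "p - z \<in> F"
      using closest_point_in_csubspace[OF assms(1)] that sub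
      by (auto simp: p_def intro: subspace_add subspace_diff)
    note dot = closest_point_dot[OF subspace_imp_convex[OF sub] closed_subspace[OF sub]]
    from dot[OF \<open>p + z \<in> F\<close>, of x] dot[OF \<open>p - z \<in> F\<close>, of x]
    show ?thesis
      by (simp add: p_def inner_diff_right inner_commute)
  qed
  have "\<i> *s y \<in> F"
    using assms unfolding csubspace_def by auto
  \<comment> \<open>The real part vanishes on y, the imaginary part on i y.\<close>
  from real_orth[OF assms(2)] real_orth[OF this]
  show ?thesis
    by (simp add: p_def complex_eq_iff Re_cinner[symmetric] cinner_smult_left)
qed

lemma proj_eq_closest_point:
  assumes "csubspace F"
  shows "proj F x = closest_point F x"
  unfolding proj_def
proof (rule the_equality)
  show "closest_point F x \<in> F \<and> (\<forall>y\<in>F. cinner y (x - closest_point F x) = 0)"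
    using assms by (simp add: closest_point_in_csubspace cinner_closest_point_orthogonal)
  fix q
  assume q: "q \<in> F \<and> (\<forall>y\<in>F. cinner y (x - q) = 0)"
  define d where "d = closest_point F x - q"
  have "d \<in> F"
    using q closest_point_in_csubspace[OF assms] csubspace_imp_subspace[OF assms]
    by (simp add: d_def subspace_diff)
  have "cinner d d = cinner d (x - q) - cinner d (x - closest_point F x)"
    by (simp add: d_def cinner_diff_right[symmetric])
  also have "\<dots> = 0"
    using q \<open>d \<in> F\<close> cinner_closest_point_orthogonal[OF assms] by simp
  finally show "q = closest_point F x"
    by (simp add: d_def cinner_self)
qed

lemma proj_in_csubspace:
  assumes "csubspace F"
  shows "proj F x \<in> F"
  using assms by (simp add: proj_eq_closest_point closest_point_in_csubspace)

lemma cinner_proj_orthogonal: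
  assumes "csubspace F" "y \<in> F"
  shows "cinner y (x - proj F x) = 0"
  using assms by (simp add: proj_eq_closest_point cinner_closest_point_orthogonal)

lemma isCont_proj:
  assumes "csubspace F"
  shows "isCont (proj F) x"
proof -
  have "proj F = closest_point F"
    using assms by (simp add: fun_eq_iff proj_eq_closest_point)
  moreover have "subspace F"
    using assms by (rule csubspace_imp_subspace)
  ultimately show ?thesis
    by (auto intro!: continuous_at_closest_point subspace_imp_convex closed_subspace dest: subspace_0)
qed

lemma cmod_cinner_le_norm_proj:
  assumes "csubspace F" "\<psi> \<in> F" "norm \<psi> = 1"
  shows "cmod (cinner \<psi> z) \<le> norm (proj F z)"
proof -
  have "cinner \<psi> z = cinner \<psi> (proj F z) + cinner \<psi> (z - proj F z)"
    by (simp add: cinner_add_right[symmetric])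
  also have "cinner \<psi> (z - proj F z) = 0"
    using assms(1,2) by (rule cinner_proj_orthogonal)
  finally show ?thesis
    using cmod_cinner_le[of \<psi> "proj F z"] assms(3) by simp
qed

lemma norm_proj_attained:
  assumes "csubspace F" "proj F x \<noteq> 0"
  shows "\<exists>\<psi>\<in>F. norm \<psi> = 1 \<and> cmod (cinner \<psi> x) = norm (proj F x)"
proof -
  define p where "p = proj F x"
  define \<psi> where "\<psi> = complex_of_real (1 / norm p) *s p"
  have "\<psi> \<in> F"
    using assms(1) proj_in_csubspace[OF assms(1)] unfolding \<psi>_def p_def csubspace_def by auto
  moreover have "norm \<psi> = 1"
    using assms(2) by (simp add: \<psi>_def p_def norm_vector_smult norm_divide)
  moreover have "cinner p x = cinner p p + cinner p (x - p)"
    by (simp add: cinner_add_right[symmetric])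
  then have "cinner p x = complex_of_real ((norm p)\<^sup>2)"
    using cinner_proj_orthogonal[OF assms(1) proj_in_csubspace[OF assms(1)]] by (simp add: p_def cinner_self)
  then have "cmod (cinner \<psi> x) = norm p"
    using assms(2) by (simp add: \<psi>_def p_def cinner_smult_left power2_eq_square)
  ultimately show ?thesis
    unfolding p_def by blast
qed

lemma tendsto_le_SUP_INF_strict_mono:
  fixes X :: "nat \<Rightarrow> 'a::{complete_linorder,linorder_topology}"
  assumes "X \<longlonglongrightarrow> L"
  shows "L \<le> (SUP r\<in>{r::nat \<Rightarrow> nat. strict_mono r}. INF i. X (r i))"
proof -
  have "L = liminf X"
    using lim_imp_Liminf[OF trivial_limit_sequentially assms] by simp
  also have "\<dots> = (SUP n. INF m\<in>{n..}. X m)"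
    by (rule liminf_SUP_INF)
  also have "\<dots> \<le> (SUP r\<in>{r::nat \<Rightarrow> nat. strict_mono r}. INF i. X (r i))"
  proof (rule SUP_least)
    fix n
    have "(INF m\<in>{n..}. X m) \<le> (INF i. X (i + n))"
      by (rule INF_mono) auto
    also have "\<dots> \<le> (SUP r\<in>{r::nat \<Rightarrow> nat. strict_mono r}. INF i. X (r i))"
      by (rule SUP_upper2[where i="\<lambda>i. i + n"]) (auto simp: strict_mono_def)
    finally show "(INF m\<in>{n..}. X m) \<le> \<dots>" .
  qed
  finally show ?thesis .
qed

lemma f_ND_le_f_IR:
  assumes "csubspace F"
  shows "f_ND U s0 F w \<le> f_IR U s0 F w"
  unfolding f_ND_def f_IR_def
proof (intro SUP_least SUP_upper2 INF_mono' ennreal_leI power_mono)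
  fix \<psi> and r :: "nat \<Rightarrow> nat" and i
  assume "\<psi> \<in> {\<psi>. \<psi> \<in> F \<and> norm \<psi> = 1}" "r \<in> {r. strict_mono r}"
  then show "r \<in> {r. strict_mono r}"
    and "cmod (cinner \<psi> (run U s0 w (r i))) \<le> norm (proj F (run U s0 w (r i)))"
    using cmod_cinner_le_norm_proj[OF assms] by auto
qed simp

lemma norm_proj_limit_le_f_ND:
  assumes "csubspace F" "strict_mono u" and lim: "(\<lambda>k. run U s0 w (u k)) \<longlonglongrightarrow> l"
  shows "ennreal ((norm (proj F l))\<^sup>2) \<le> f_ND U s0 F w"
proof (cases "proj F l = 0")
  case False
  then obtain \<psi> where \<psi>: "\<psi> \<in> F" "norm \<psi> = 1" "cmod (cinner \<psi> l) = norm (proj F l)"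
    using norm_proj_attained[OF assms(1)] by blast
  have "(\<lambda>k. ennreal ((cmod (cinner \<psi> (run U s0 w (u k))))\<^sup>2)) \<longlonglongrightarrow> ennreal ((norm (proj F l))\<^sup>2)"
    unfolding \<psi>(3)[symmetric] by (intro tendsto_ennrealI tendsto_intros tendsto_cinner_right lim)
  then have "ennreal ((norm (proj F l))\<^sup>2)
      \<le> (SUP r\<in>{r::nat \<Rightarrow> nat. strict_mono r}. INF i. ennreal ((cmod (cinner \<psi> (run U s0 w (u (r i)))))\<^sup>2))"
    by (rule tendsto_le_SUP_INF_strict_mono)
  also have "\<dots> \<le> (SUP r\<in>{r::nat \<Rightarrow> nat. strict_mono r}. INF i. ennreal ((cmod (cinner \<psi> (run U s0 w (r i))))\<^sup>2))"
    by (rule SUP_mono) (use \<open>strict_mono u\<close> in \<open>auto intro!: exI[of _ "u \<circ> _"] strict_mono_o\<close>)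
  also have "\<dots> \<le> f_ND U s0 F w"
    unfolding f_ND_def using \<psi> by (auto intro: SUP_upper2)
  finally show ?thesis .
qed simp

lemma f_IR_le_f_ND:
  assumes "csubspace F" "bounded (range (run U s0 w))"
  shows "f_IR U s0 F w \<le> f_ND U s0 F w"
  unfolding f_IR_def
proof (rule SUP_least)
  fix r :: "nat \<Rightarrow> nat"
  assume "r \<in> {r. strict_mono r}"
  define s where "s = run U s0 w"
  have "bounded (range (s \<circ> r))"
    using assms(2) by (rule bounded_subset) (auto simp: s_def)
  then obtain t l where "strict_mono t" and lim: "(s \<circ> r \<circ> t) \<longlonglongrightarrow> l"
    using bounded_imp_convergent_subsequence by (metis comp_assoc)
  define u where "u = r \<circ> t"
  have "(\<lambda>k. proj F (s (u k))) \<longlonglongrightarrow> proj F l"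
    using isCont_tendsto_compose[OF isCont_proj[OF assms(1)] lim] by (simp add: u_def o_def)
  then have "(\<lambda>k. ennreal ((norm (proj F (s (u k))))\<^sup>2)) \<longlonglongrightarrow> ennreal ((norm (proj F l))\<^sup>2)"
    by (intro tendsto_ennrealI tendsto_intros)
  then have "(INF i. ennreal ((norm (proj F (s (r i))))\<^sup>2)) \<le> ennreal ((norm (proj F l))\<^sup>2)"
    by (rule LIMSEQ_le_const) (auto simp: u_def intro: INF_lower)
  also have "\<dots> \<le> f_ND U s0 F w"
  proof (rule norm_proj_limit_le_f_ND[OF assms(1)])
    show "strict_mono u"
      using \<open>r \<in> _\<close> \<open>strict_mono t\<close> by (simp add: u_def strict_mono_o)
    show "(\<lambda>k. run U s0 w (u k)) \<longlonglongrightarrow> l"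
      using lim by (simp add: s_def u_def o_def)
  qed
  finally show "(INF i. ennreal ((norm (proj F (run U s0 w (r i))))\<^sup>2)) \<le> f_ND U s0 F w"
    by (simp add: s_def)
qed

theorem proposition1:
  fixes U :: "'s::finite \<Rightarrow> complex^'n::finite^'n"
    and s0 :: "complex^'n"
    and F :: "(complex^'n) set"
    and w :: "nat \<Rightarrow> 's"
  assumes "norm s0 = 1"
    and "\<And>\<sigma>. unitary_mat (U \<sigma>)"
    and "csubspace F"
  shows "f_ND U s0 F w = f_IR U s0 F w"
proof (rule antisym)
  show "f_ND U s0 F w \<le> f_IR U s0 F w"
    using assms(3) by (rule f_ND_le_f_IR)
  have "range (run U s0 w) \<subseteq> cball 0 1"
    using assms(1) by (auto simp: norm_run[of U, OF assms(2)])
  then have "bounded (range (run U s0 w))"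
    using bounded_cball bounded_subset by blast
  with assms(3) show "f_IR U s0 F w \<le> f_ND U s0 F w"
    by (rule f_IR_le_f_ND)
qed

end
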